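(* Let $Q_1,Q_2$ be strongly connected quivers with $Q_1\subset Q_2$ (i.e. $V(Q_1)\subset V(Q_2)$ and $A(Q_1)\subset A(Q_2)$). Then $\#A(Q_2)-\#A(Q_1)\geq \#V(Q_2)-\#V(Q_1)+1$.
   Context: A quiver is a finite oriented graph with vertex set $V(\cdot)$ and arrow set $A(\cdot)$. A quiver is strongly connected if there is a closed (oriented) path in it passing through all its vertices. *)

theory Defs
  imports Main
begin

definition quiver :: "'v set \<Rightarrow> 'e set \<Rightarrow> ('e \<Rightarrow> 'v) \<Rightarrow> ('e \<Rightarrow> 'v) \<Rightarrow> bool" where
  "quiver V A src tgt \<longleftrightarrow> finite V \<and> finite A \<and> (\<forall>e\<in>A. src e \<in> V \<and> tgt e \<in> V)"

definition closed_path :: "'e set \<Rightarrow> ('e \<Rightarrow> 'v) \<Rightarrow> ('e \<Rightarrow> 'v) \<Rightarrow> 'e list \<Rightarrow> bool" where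
  "closed_path A src tgt es \<longleftrightarrow> es \<noteq> [] \<and> set es \<subseteq> A \<and>
     (\<forall>i. Suc i < length es \<longrightarrow> tgt (es ! i) = src (es ! Suc i)) \<and>
     tgt (last es) = src (hd es)"

definition path_vertices :: "('e \<Rightarrow> 'v) \<Rightarrow> ('e \<Rightarrow> 'v) \<Rightarrow> 'e list \<Rightarrow> 'v set" where
  "path_vertices src tgt es = src ` set es \<union> tgt ` set es"

definition strongly_connected :: "'v set \<Rightarrow> 'e set \<Rightarrow> ('e \<Rightarrow> 'v) \<Rightarrow> ('e \<Rightarrow> 'v) \<Rightarrow> bool" where
  "strongly_connected V A src tgt \<longleftrightarrow> quiver V A src tgt \<and>
     (\<exists>es. closed_path A src tgt es \<and> V \<subseteq> path_vertices src tgt es)"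

end

theory Submission
  imports Defs
begin

text \<open>Every vertex of a strongly connected quiver is the source of an arrow on the closed path
  through all vertices. If the larger quiver has a vertex outside the smaller one, the path must
  at some point leave the vertex set of the smaller quiver: that arrow is new, and so are the
  arrows starting at the new vertices, which gives one more new arrow than new vertices.\<close>

lemma closed_path_tgt_nth:
  assumes "closed_path A src tgt es" and "k < length es"
  shows "tgt (es ! k) = src (es ! (Suc k mod length es))"
proof (cases "Suc k < length es")
  case True
  then show ?thesis using assms(1) unfolding closed_path_def by simp
next
  case False
  with assms(2) have "Suc k = length es" by simp
  then show ?thesis using assms(1) unfolding closed_path_def
    by (metis diff_Suc_1 hd_conv_nth last_conv_nth mod_self)
qed

lemma closed_path_tgt_subset_src:
  assumes "closed_path A src tgt es"
  shows "tgt ` set es \<subseteq> src ` set es"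
proof
  fix v assume "v \<in> tgt ` set es"
  then obtain k where "k < length es" "v = tgt (es ! k)" by (auto simp: in_set_conv_nth)
  then show "v \<in> src ` set es"
    using closed_path_tgt_nth[OF assms] by (metis image_eqI length_pos_if_in_set mod_less_divisor nth_mem)
qed

lemma closed_path_leaves:
  assumes cp: "closed_path A src tgt es"
    and "e \<in> set es" "src e \<in> S" and "e' \<in> set es" "src e' \<notin> S"
  shows "\<exists>d\<in>set es. src d \<in> S \<and> tgt d \<notin> S"
proof (rule ccontr)
  assume "\<not> ?thesis"
  then have closed: "src (es ! (Suc j mod length es)) \<in> S"
    if "j < length es" "src (es ! j) \<in> S" for j
    using that closed_path_tgt_nth[OF cp] by (metis nth_mem)
  obtain i where i: "i < length es" "src (es ! i) \<in> S"
    using assms(2,3) by (auto simp: in_set_conv_nth)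
  obtain k where k: "k < length es" "src (es ! k) \<notin> S"
    using assms(4,5) by (auto simp: in_set_conv_nth)
  have reach: "src (es ! ((i + j) mod length es)) \<in> S" for j
  proof (induction j)
    case 0
    then show ?case using i by simp
  next
    case (Suc j)
    have "src (es ! (Suc ((i + j) mod length es) mod length es)) \<in> S"
      by (rule closed[OF mod_less_divisor Suc.IH]) (use i(1) in auto)
    then show ?case by (simp add: mod_Suc_eq)
  qed
  have "(i + (length es - i + k)) mod length es = k" using i(1) k(1) by simp
  then show False using reach[of "length es - i + k"] k(2) by simp
qed

lemma strongly_connected_path_sources:
  assumes "strongly_connected V A src tgt"
  obtains es where "closed_path A src tgt es" "V = src ` set es"
proof -
  obtain es where es: "closed_path A src tgt es" "V \<subseteq> path_vertices src tgt es"
    and q: "quiver V A src tgt"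
    using assms unfolding strongly_connected_def by blast
  have "set es \<subseteq> A" using es(1) unfolding closed_path_def by simp
  then have "path_vertices src tgt es \<subseteq> V" using q unfolding quiver_def path_vertices_def by blast
  moreover have "path_vertices src tgt es = src ` set es"
    using closed_path_tgt_subset_src[OF es(1)] unfolding path_vertices_def by blast
  ultimately have "V = src ` set es" using es(2) by simp
  then show ?thesis using that es(1) by simp
qed

lemma strongly_connected_vertices_nonempty:
  assumes "strongly_connected V A src tgt"
  shows "V \<noteq> {}"
proof -
  obtain es where "closed_path A src tgt es" "V = src ` set es"
    using strongly_connected_path_sources[OF assms] .
  then show ?thesis unfolding closed_path_def by simp
qed

lemma int_card_diff:
  assumes "finite B" "A \<subseteq> B"
  shows "int (card B) - int (card A) = int (card (B - A))"
  using assms card_Diff_subset[OF finite_subset, OF assms(2,1)] card_mono[OF assms] by simp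

lemma card_new_vertices_less_card_new_arrows:
  assumes q1: "quiver V1 A1 src tgt" and "finite A2" and "V2 \<subseteq> src ` A2"
    and d: "d \<in> A2" "src d \<in> V1" "tgt d \<notin> V1"
  shows "card (V2 - V1) < card (A2 - A1)"
proof -
  define N where "N = {a \<in> A2. src a \<notin> V1}"
  have "finite N" using \<open>finite A2\<close> unfolding N_def by simp
  have "V2 - V1 \<subseteq> src ` N" using assms(3) unfolding N_def by blast
  then have "card (V2 - V1) \<le> card N" using surj_card_le[OF \<open>finite N\<close>] by blast
  moreover have "insert d N \<subseteq> A2 - A1" "d \<notin> N"
    using d q1 unfolding N_def quiver_def by auto
  then have "card N < card (A2 - A1)"
    using card_mono[of "A2 - A1" "insert d N"] \<open>finite A2\<close> \<open>finite N\<close> by simp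
  ultimately show ?thesis by simp
qed

theorem lemma2p3:
  fixes V1 V2 :: "'v set" and A1 A2 :: "'e set" and src tgt :: "'e \<Rightarrow> 'v"
  assumes "strongly_connected V1 A1 src tgt"
    and "strongly_connected V2 A2 src tgt"
    and "V1 \<subseteq> V2" and "A1 \<subseteq> A2"
    and "V1 \<noteq> V2 \<or> A1 \<noteq> A2"
  shows "int (card A2) - int (card A1) \<ge> int (card V2) - int (card V1) + 1"
proof -
  have q1: "quiver V1 A1 src tgt" and "quiver V2 A2 src tgt"
    using assms(1,2) unfolding strongly_connected_def by auto
  then have fin: "finite V2" "finite A2" unfolding quiver_def by auto
  have "card (V2 - V1) + 1 \<le> card (A2 - A1)"
  proof (cases "V1 = V2")
    case True
    with assms(4,5) have "A2 - A1 \<noteq> {}" by blast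
    then show ?thesis using True fin(2) by (simp add: Suc_leI card_gt_0_iff)
  next
    case False
    obtain es where es: "closed_path A2 src tgt es" "V2 = src ` set es"
      using strongly_connected_path_sources[OF assms(2)] .
    have path_in_A2: "set es \<subseteq> A2" using es(1) unfolding closed_path_def by simp
    obtain e where "e \<in> set es" "src e \<in> V1"
      using strongly_connected_vertices_nonempty[OF assms(1)] assms(3) es(2) by blast
    moreover obtain e' where "e' \<in> set es" "src e' \<notin> V1"
      using False assms(3) es(2) by blast
    ultimately obtain d where d: "d \<in> set es" "src d \<in> V1" "tgt d \<notin> V1"
      using closed_path_leaves[OF es(1)] by blast
    have "V2 \<subseteq> src ` A2" using es(2) path_in_A2 by blast
    moreover have "d \<in> A2" using d(1) path_in_A2 by blast
    ultimately have "card (V2 - V1) < card (A2 - A1)"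
      using card_new_vertices_less_card_new_arrows[OF q1 fin(2)] d(2,3) by blast
    then show ?thesis by simp
  qed
  then show ?thesis using int_card_diff[OF fin(1) assms(3)] int_card_diff[OF fin(2) assms(4)] by simp
qed

end
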